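(* Let $K\ge1$, $\bar P_1,\dots,\bar P_K>0$ and $0<h_1<h_2<\dots<h_K$. Consider maximizing over $\mathbf P\in\mathcal P=\{\mathbf P:0\le P_k\le\bar P_k\ \forall k\}$ the quantity $$f(\mathbf P)=\tfrac12\log\Big(1+\sum_{k=1}^KP_k\Big)-\tfrac12\log\Big(1+\sum_{k=1}^Kh_kP_k\Big).$$ Set $h_0=0$, $\bar P_0=0$, $h_{K+1}=+\infty$, and for $0\le T\le K$ let $\phi_T=\frac{1+\sum_{k=0}^Th_k\bar P_k}{1+\sum_{k=0}^T\bar P_k}$. Then there is a (unique) index $T\in\{0,\dots,K\}$ with $h_T<\phi_T\le h_{T+1}$, and the allocation $P^*_k=\bar P_k$ for $k\le T$, $P^*_k=0$ for $k>T$ maximizes $f$ over $\mathcal P$ (hence also maximizes the secrecy sum-rate $[f(\mathbf P)]^+$ of the superposition region).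
   Context: $\log$ is base 2; $[x]^+=\max\{x,0\}$. The quantity $[f(\mathbf P)]^+$ is the secrecy sum-rate bound $\sum_k R^s_k\le[C^M_{\mathcal K}(\mathbf P)-C^W_{\mathcal K}(\mathbf P)]^+$ of the superposition region of the standardized Gaussian multiple-access wire-tap channel, where user $k$ has (standardized) eavesdropper gain $h_k$ and the intended receiver's gains are all 1. *)

theory Defs
  imports "HOL-Analysis.Analysis"
begin

text \<open>Users are indexed by 1..K; values of functions at other indices are irrelevant.\<close>

definition secf :: "nat \<Rightarrow> (nat \<Rightarrow> real) \<Rightarrow> (nat \<Rightarrow> real) \<Rightarrow> real" where
  "secf K h P = (1/2) * log 2 (1 + (\<Sum>k=1..K. P k)) - (1/2) * log 2 (1 + (\<Sum>k=1..K. h k * P k))"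

definition feasible :: "nat \<Rightarrow> (nat \<Rightarrow> real) \<Rightarrow> (nat \<Rightarrow> real) set" where
  "feasible K Pbar = {P. \<forall>k\<in>{1..K}. 0 \<le> P k \<and> P k \<le> Pbar k}"

text \<open>phi_T; the k = 0 terms vanish since h_0 = 0 and Pbar_0 = 0.\<close>
definition phi :: "(nat \<Rightarrow> real) \<Rightarrow> (nat \<Rightarrow> real) \<Rightarrow> nat \<Rightarrow> real" where
  "phi h Pbar T = (1 + (\<Sum>k=1..T. h k * Pbar k)) / (1 + (\<Sum>k=1..T. Pbar k))"

definition hext :: "nat \<Rightarrow> (nat \<Rightarrow> real) \<Rightarrow> nat \<Rightarrow> ereal" where
  "hext K h k = (if k = 0 then 0 else if k \<le> K then ereal (h k) else \<infinity>)"

definition threshold_idx :: "nat \<Rightarrow> (nat \<Rightarrow> real) \<Rightarrow> (nat \<Rightarrow> real) \<Rightarrow> nat \<Rightarrow> bool" where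
  "threshold_idx K h Pbar T \<longleftrightarrow> T \<le> K \<and> hext K h T < ereal (phi h Pbar T)
      \<and> ereal (phi h Pbar T) \<le> hext K h (Suc T)"

end

theory Submission
  imports Defs
begin

text \<open>
  The secrecy rate is half the logarithm of (1 + \<Sum> P) / (1 + \<Sum> h P), so maximising it means
  minimising the average eavesdropper gain (1 + \<Sum> h P) / (1 + \<Sum> P), in which the noise acts
  as a user of gain 1. Filling users 1..T to full power gives the average phi_T, and for every
  allocation  (1 + \<Sum> h P) - phi_T (1 + \<Sum> P) = (1 - phi_T) + \<Sum> (h_k - phi_T) P_k.
  The right-hand side is minimised by giving full power exactly to the users with h_k < phi_T,
  which for the threshold index T are the users 1..T, and there it vanishes.
  The threshold index exists and is unique because phi_(t+1) is a weighted mediant of phi_t and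
  h_(t+1): once phi_t \<le> h_(t+1), the increasing gains stay at or above the averages, while
  h_(t+1) < phi_t forces h_(t+1) < phi_(t+1).
\<close>

lemma mediant_le_iff:
  fixes A B c p :: "'a::linordered_field"
  assumes "0 < B" "0 \<le> p"
  shows "(A + c * p) / (B + p) \<le> c \<longleftrightarrow> A / B \<le> c"
proof -
  have "(A + c * p) / (B + p) \<le> c \<longleftrightarrow> A + c * p \<le> c * (B + p)"
    using assms by (simp add: pos_divide_le_eq)
  also have "\<dots> \<longleftrightarrow> A \<le> c * B"
    by (simp add: algebra_simps)
  also have "\<dots> \<longleftrightarrow> A / B \<le> c"
    using assms by (simp add: pos_divide_le_eq)
  finally show ?thesis .
qed

lemma phi_Suc:
  "phi h Pbar (Suc t) = ((1 + (\<Sum>k=1..t. h k * Pbar k)) + h (Suc t) * Pbar (Suc t))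
      / ((1 + (\<Sum>k=1..t. Pbar k)) + Pbar (Suc t))"
  unfolding phi_def by (simp add: add.assoc)

lemma phi_Suc_le_iff:
  assumes "\<And>k. k \<in> {1..Suc t} \<Longrightarrow> 0 \<le> Pbar k"
  shows "phi h Pbar (Suc t) \<le> h (Suc t) \<longleftrightarrow> phi h Pbar t \<le> h (Suc t)"
proof -
  have "0 \<le> (\<Sum>k=1..t. Pbar k)"
    by (rule sum_nonneg) (use assms in auto)
  then have "0 < 1 + (\<Sum>k=1..t. Pbar k)"
    by linarith
  from mediant_le_iff[OF this, where p = "Pbar (Suc t)" and c = "h (Suc t)"] assms
  show ?thesis
    unfolding phi_Suc by (simp add: phi_def)
qed

lemma threshold_idx_iff:
  "threshold_idx K h Pbar T \<longleftrightarrow>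
     T \<le> K \<and> (0 < T \<longrightarrow> h T < phi h Pbar T) \<and> (T < K \<longrightarrow> phi h Pbar T \<le> h (Suc T))"
  by (auto simp: threshold_idx_def hext_def phi_def)

lemma threshold_idx_exists:
  assumes "\<And>k. k \<in> {1..K} \<Longrightarrow> 0 \<le> Pbar k"
  shows "\<exists>T. threshold_idx K h Pbar T"
proof -
  define below where "below t \<longleftrightarrow> (t < K \<longrightarrow> phi h Pbar t \<le> h (Suc t))" for t
  define T where "T = (LEAST t. below t)"
  have "below K"
    by (simp add: below_def)
  then have "below T" "T \<le> K"
    unfolding T_def by (auto intro: LeastI Least_le)
  moreover have "h T < phi h Pbar T" if "0 < T"
  proof -
    obtain t where T: "T = Suc t"
      using \<open>0 < T\<close> gr0_conv_Suc by blast
    then have "\<not> below t"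
      unfolding T_def by (metis lessI not_less_Least)
    then show ?thesis
      using phi_Suc_le_iff[of t Pbar h] assms \<open>T \<le> K\<close> T by (auto simp: below_def)
  qed
  ultimately show ?thesis
    unfolding threshold_idx_iff below_def by blast
qed

lemma phi_le_gain_beyond:
  assumes Pbar: "\<And>k. k \<in> {1..K} \<Longrightarrow> 0 \<le> Pbar k"
    and mono: "mono_on {1..K} h"
    and "phi h Pbar t \<le> h (Suc t)" "t < s" "s \<le> K"
  shows "phi h Pbar s \<le> h s"
  using Suc_leI[OF \<open>t < s\<close>] \<open>s \<le> K\<close>
proof (induction s rule: dec_induct)
  case base
  then show ?case
    using assms(3) phi_Suc_le_iff[of t Pbar h] Pbar by auto
next
  case (step n)
  have "phi h Pbar n \<le> h (Suc n)"
    using step mono_onD[OF mono, of n "Suc n"] by auto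
  then show ?case
    using phi_Suc_le_iff[of n Pbar h] Pbar step by auto
qed

lemma threshold_idx_unique:
  assumes "\<And>k. k \<in> {1..K} \<Longrightarrow> 0 \<le> Pbar k" "mono_on {1..K} h"
    and "threshold_idx K h Pbar T" "threshold_idx K h Pbar T'"
  shows "T = T'"
proof -
  have "\<not> S < S'" if "threshold_idx K h Pbar S" "threshold_idx K h Pbar S'" for S S'
  proof
    assume "S < S'"
    moreover have "phi h Pbar S \<le> h (Suc S)" "S' \<le> K" "h S' < phi h Pbar S'"
      using that \<open>S < S'\<close> by (auto simp: threshold_idx_iff)
    ultimately show False
      using phi_le_gain_beyond[of K Pbar h S S'] assms(1,2) by fastforce
  qed
  then show ?thesis
    using assms(3,4) by (meson linorder_neqE)
qed

lemma sum_truncated: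
  fixes f :: "nat \<Rightarrow> 'a::comm_monoid_add"
  assumes "T \<le> K"
  shows "(\<Sum>k=1..K. if k \<le> T then f k else 0) = (\<Sum>k=1..T. f k)"
proof -
  have "{k \<in> {1..K}. k \<le> T} = {1..T}"
    using assms by auto
  then show ?thesis
    by (metis finite_atLeastAtMost sum.inter_filter)
qed

lemma greedy_weighted_sum_le:
  fixes w :: "nat \<Rightarrow> real"
  assumes "T \<le> K" "P \<in> feasible K Pbar"
    and "\<And>k. k \<in> {1..T} \<Longrightarrow> w k \<le> 0" "\<And>k. k \<in> {T<..K} \<Longrightarrow> 0 \<le> w k"
  shows "(\<Sum>k=1..T. w k * Pbar k) \<le> (\<Sum>k=1..K. w k * P k)"
proof -
  have "(\<Sum>k=1..T. w k * Pbar k) = (\<Sum>k=1..K. if k \<le> T then w k * Pbar k else 0)"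
    using sum_truncated[OF \<open>T \<le> K\<close>, of "\<lambda>k. w k * Pbar k"] by simp
  also have "\<dots> \<le> (\<Sum>k=1..K. w k * P k)"
  proof (rule sum_mono)
    fix k assume k: "k \<in> {1..K}"
    then have "0 \<le> P k" "P k \<le> Pbar k"
      using assms(2) by (auto simp: feasible_def)
    then show "(if k \<le> T then w k * Pbar k else 0) \<le> w k * P k"
      using k assms(3,4)[of k] by (auto intro: mult_left_mono_neg)
  qed
  finally show ?thesis .
qed

lemma phi_threshold_mult_le:
  assumes Pbar: "\<And>k. k \<in> {1..K} \<Longrightarrow> 0 \<le> Pbar k" and mono: "mono_on {1..K} h"
    and thr: "threshold_idx K h Pbar T" and P: "P \<in> feasible K Pbar"
  shows "phi h Pbar T * (1 + (\<Sum>k=1..K. P k)) \<le> 1 + (\<Sum>k=1..K. h k * P k)"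
proof -
  define c where "c = phi h Pbar T"
  have "T \<le> K"
    using thr by (simp add: threshold_idx_iff)
  have "0 \<le> (\<Sum>k=1..T. Pbar k)"
    by (rule sum_nonneg) (use Pbar \<open>T \<le> K\<close> in auto)
  then have c_eq: "c * (1 + (\<Sum>k=1..T. Pbar k)) = 1 + (\<Sum>k=1..T. h k * Pbar k)"
    by (simp add: c_def phi_def)
  have "h k - c \<le> 0" if "k \<in> {1..T}" for k
  proof -
    have "h k \<le> h T"
      using mono_onD[OF mono, of k T] that \<open>T \<le> K\<close> by auto
    moreover have "h T < c"
      using thr that by (auto simp: threshold_idx_iff c_def)
    ultimately show ?thesis by simp
  qed
  moreover have "0 \<le> h k - c" if "k \<in> {T<..K}" for k
  proof -
    have "c \<le> h (Suc T)"
      using thr that by (auto simp: threshold_idx_iff c_def)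
    moreover have "h (Suc T) \<le> h k"
      using mono_onD[OF mono, of "Suc T" k] that by auto
    ultimately show ?thesis by simp
  qed
  ultimately have "(\<Sum>k=1..T. (h k - c) * Pbar k) \<le> (\<Sum>k=1..K. (h k - c) * P k)"
    by (rule greedy_weighted_sum_le[OF \<open>T \<le> K\<close> P])
  then show ?thesis
    using c_eq by (simp add: c_def[symmetric] algebra_simps sum_subtractf sum_distrib_left)
qed

lemma log_diff_le_log_diff:
  assumes "1 < b" "0 < x" "0 < y" "0 < u" "0 < v" "x * v \<le> u * y"
  shows "log b x - log b y \<le> log b u - log b v"
proof -
  have "log b (x * v) \<le> log b (u * y)"
    using assms by simp
  then show ?thesis
    using assms by (simp add: log_mult)
qed

lemma secf_le_threshold_allocation:
  assumes Pbar: "\<And>k. k \<in> {1..K} \<Longrightarrow> 0 \<le> Pbar k"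
    and h: "\<And>k. k \<in> {1..K} \<Longrightarrow> 0 \<le> h k" and mono: "mono_on {1..K} h"
    and thr: "threshold_idx K h Pbar T" and P: "P \<in> feasible K Pbar"
  shows "secf K h P \<le> secf K h (\<lambda>k. if k \<le> T then Pbar k else 0)"
proof -
  define B A Bs As where "B = 1 + (\<Sum>k=1..K. P k)" and "A = 1 + (\<Sum>k=1..K. h k * P k)"
    and "Bs = 1 + (\<Sum>k=1..T. Pbar k)" and "As = 1 + (\<Sum>k=1..T. h k * Pbar k)"
  have "T \<le> K"
    using thr by (simp add: threshold_idx_iff)
  have P_nonneg: "0 \<le> P k" if "k \<in> {1..K}" for k
    using P that by (simp add: feasible_def)
  have "0 \<le> (\<Sum>k=1..K. P k)" "0 \<le> (\<Sum>k=1..K. h k * P k)"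
    "0 \<le> (\<Sum>k=1..T. Pbar k)" "0 \<le> (\<Sum>k=1..T. h k * Pbar k)"
    using P_nonneg h Pbar \<open>T \<le> K\<close> by (auto intro!: sum_nonneg)
  then have pos: "0 < B" "0 < A" "0 < Bs" "0 < As"
    by (simp_all add: B_def A_def Bs_def As_def)
  have "phi h Pbar T * B \<le> A"
    using phi_threshold_mult_le[OF Pbar mono thr P] by (simp add: A_def B_def)
  moreover have "phi h Pbar T = As / Bs"
    by (simp add: phi_def As_def Bs_def)
  ultimately have "B * As \<le> Bs * A"
    using pos by (simp add: field_simps)
  then have "log 2 B - log 2 A \<le> log 2 Bs - log 2 As"
    using log_diff_le_log_diff pos by simp
  moreover have "(\<Sum>k=1..K. if k \<le> T then Pbar k else 0) = Bs - 1"
    using sum_truncated[OF \<open>T \<le> K\<close>, of Pbar] by (simp add: Bs_def)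
  moreover have "(\<Sum>k=1..K. h k * (if k \<le> T then Pbar k else 0)) = As - 1"
    using sum_truncated[OF \<open>T \<le> K\<close>, of "\<lambda>k. h k * Pbar k"]
    by (simp add: As_def if_distrib[of "times _"] cong: if_cong)
  ultimately show ?thesis
    by (simp add: secf_def A_def B_def)
qed

theorem theorem3:
  fixes K :: nat and h Pbar :: "nat \<Rightarrow> real"
  assumes "K \<ge> 1"
    and "\<And>k. k \<in> {1..K} \<Longrightarrow> Pbar k > 0"
    and "h 1 > 0"
    and "\<And>i j. i \<in> {1..K} \<Longrightarrow> j \<in> {1..K} \<Longrightarrow> i < j \<Longrightarrow> h i < h j"
  shows "(\<exists>!T. threshold_idx K h Pbar T)
    \<and> (\<forall>T. threshold_idx K h Pbar T \<longrightarrow>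
         (let Pstar = (\<lambda>k. if k \<le> T then Pbar k else 0) in
            Pstar \<in> feasible K Pbar
          \<and> (\<forall>P\<in>feasible K Pbar. secf K h P \<le> secf K h Pstar)
          \<and> (\<forall>P\<in>feasible K Pbar. max (secf K h P) 0 \<le> max (secf K h Pstar) 0)))"
proof -
  have Pbar: "\<And>k. k \<in> {1..K} \<Longrightarrow> 0 \<le> Pbar k"
    using assms(2) by (simp add: less_imp_le)
  have mono: "mono_on {1..K} h"
    using assms(4) by (intro monotone_onI) (fastforce simp: order_le_less)
  have h: "\<And>k. k \<in> {1..K} \<Longrightarrow> 0 \<le> h k"
    using mono_onD[OF mono, of 1] assms(1,3) by fastforce
  have "\<exists>!T. threshold_idx K h Pbar T"
    using threshold_idx_exists[of K Pbar h] threshold_idx_unique[of K Pbar h] Pbar mono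
    by blast
  moreover have "(\<lambda>k. if k \<le> T then Pbar k else 0) \<in> feasible K Pbar" for T
    using Pbar by (simp add: feasible_def)
  moreover have "secf K h P \<le> secf K h (\<lambda>k. if k \<le> T then Pbar k else 0)"
    if "threshold_idx K h Pbar T" "P \<in> feasible K Pbar" for T P
    using secf_le_threshold_allocation[of K Pbar h] Pbar h mono that by blast
  ultimately show ?thesis
    by (auto simp: Let_def intro: max.coboundedI1 order_trans)
qed

end
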